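(* Let $V$ be a nonempty set, $E\subset V\times V$, $W\subset V$, and let $B,C\subset V$ satisfy $B\cap C=\emptyset$, $B\cap W=\emptyset$, $C\cap W=\emptyset$. The following are equivalent: (1) for every $b\in B$ and $c\in C$, $\operatorname{cl}_W(R_Wb)\cap\operatorname{cl}_W(R_Wc)=\emptyset$ (i.e. $b$ and $c$ are t-separated w.r.t. $W$); (2) there exist $W_B,W_C\subset V$ with $W_B\cap W_C=\emptyset$, $W_B\cup W_C=W$, and $\operatorname{cl}_W(B\cup W_B)\cap\operatorname{cl}_W(C\cup W_C)=\emptyset$.
   Context: Relations on $V$: $x\,R\,y$ means $(x,y)\in R$; composition $RR'$: $x(RR')y$ iff there is $z$ with $xRz$ and $zR'y$; $R^{-1}$ is the converse; $R^0=\Delta$, $R^{n+1}=RR^n$, $R^+=\bigcup_{k\ge1}R^k$, $R^*=\bigcup_{k\ge0}R^k$. For $S\subset V$, $\Delta_S=\{(x,x):x\in S\}$, $\Delta=\Delta_V$; foreset $RS=\{x:\exists s\in S,\ xRs\}$, $Rc=R\{c\}$. For any relation $F$, $\mathcal T_F=\{O\subset V: OF\subset O\}$ is a topology on $V$. With $W^c=V\setminus W$: $E_W=\Delta_{W^c}E$; $B_W=E(E_W)^*$; $B_W^-=(B_W)^{-1}=(E_W^{-1})^*E^{-1}$; $K_W=B_W^-\Delta_{W^c}B_W$; $C_W=(\Delta_WK_W\Delta_W)^+\cup\Delta_W$; $R_W=\Delta\cup C_W(B_W^-\cup K_W^{-1})$. For $S\subset V$, $\operatorname{cl}_W(S)$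 is the topological closure of $S$ in the topology $\mathcal T_{E_W}$. *)

theory Defs
  imports "HOL-Analysis.Analysis"
begin

text \<open>Relations on a carrier V are sets of pairs; composition R R' is relcomp (O),
  converse is converse, \<Delta>_S is Id_on S, and R^* = \<Delta>_V \<union> R^+ (R^0 = \<Delta>_V).\<close>

definition rstar :: "'a set \<Rightarrow> ('a \<times> 'a) set \<Rightarrow> ('a \<times> 'a) set" where
  "rstar V R = Id_on V \<union> trancl R"

definition foreset :: "('a \<times> 'a) set \<Rightarrow> 'a set \<Rightarrow> 'a set" where
  "foreset R S = {x. \<exists>s\<in>S. (x, s) \<in> R}"

definition rel_topology :: "'a set \<Rightarrow> ('a \<times> 'a) set \<Rightarrow> 'a topology" where
  "rel_topology V F = topology (\<lambda>U. U \<subseteq> V \<and> F `` U \<subseteq> U)"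

definition EW :: "'a set \<Rightarrow> ('a \<times> 'a) set \<Rightarrow> 'a set \<Rightarrow> ('a \<times> 'a) set" where
  "EW V E W = Id_on (V - W) O E"

definition BW :: "'a set \<Rightarrow> ('a \<times> 'a) set \<Rightarrow> 'a set \<Rightarrow> ('a \<times> 'a) set" where
  "BW V E W = E O rstar V (EW V E W)"

definition BWm :: "'a set \<Rightarrow> ('a \<times> 'a) set \<Rightarrow> 'a set \<Rightarrow> ('a \<times> 'a) set" where
  "BWm V E W = converse (BW V E W)"

definition KW :: "'a set \<Rightarrow> ('a \<times> 'a) set \<Rightarrow> 'a set \<Rightarrow> ('a \<times> 'a) set" where
  "KW V E W = BWm V E W O Id_on (V - W) O BW V E W"

definition CW :: "'a set \<Rightarrow> ('a \<times> 'a) set \<Rightarrow> 'a set \<Rightarrow> ('a \<times> 'a) set" where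
  "CW V E W = trancl (Id_on W O KW V E W O Id_on W) \<union> Id_on W"

definition RW :: "'a set \<Rightarrow> ('a \<times> 'a) set \<Rightarrow> 'a set \<Rightarrow> ('a \<times> 'a) set" where
  "RW V E W = Id_on V \<union> CW V E W O (BWm V E W \<union> converse (KW V E W))"

definition clW :: "'a set \<Rightarrow> ('a \<times> 'a) set \<Rightarrow> 'a set \<Rightarrow> 'a set \<Rightarrow> 'a set" where
  "clW V E W S = (rel_topology V (EW V E W)) closure_of S"

end

theory Submission
  imports Defs
begin

text \<open>The open sets of \<open>\<T>\<^sub>F\<close> are the \<open>F\<close>-forward closed sets, so \<open>cl\<^sub>W(S)\<close> is the set of
  points from which \<open>S\<close> is reachable along \<open>E\<^sub>W\<close>. A nontrivial such path starts outside \<open>W\<close> and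
  is then a \<open>B\<^sub>W\<close>-edge, so two such paths from a common start are joined by a \<open>K\<^sub>W\<close>-edge.
  For (1) \<Rightarrow> (2) let \<open>W\<^sub>B\<close> be the vertices of \<open>W\<close> lying in some \<open>R\<^sub>W b\<close> with \<open>b \<in> B\<close>. Since \<open>R\<^sub>W b\<close>
  absorbs the \<open>K\<^sub>W\<close>-neighbours in \<open>W\<close> of its members, a common ancestor of \<open>R\<^sub>W b\<close> and of
  \<open>t \<in> W\<close> puts \<open>t\<close> into \<open>W\<^sub>B\<close>, while a common ancestor of \<open>R\<^sub>W b\<close> and \<open>c \<in> C\<close> contradicts (1).
  For (2) \<Rightarrow> (1), disjointness of the closures forbids \<open>B\<^sub>W\<close>- and \<open>K\<^sub>W\<close>-edges from \<open>B \<union> W\<^sub>B\<close>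
  into \<open>W\<^sub>C\<close>, hence \<open>R\<^sub>W b \<subseteq> B \<union> W\<^sub>B\<close>, and symmetrically \<open>R\<^sub>W c \<subseteq> C \<union> W\<^sub>C\<close>.\<close>

lemma openin_rel_topology: "openin (rel_topology V F) U \<longleftrightarrow> U \<subseteq> V \<and> F `` U \<subseteq> U"
proof -
  have "istopology (\<lambda>U. U \<subseteq> V \<and> F `` U \<subseteq> U)"
    unfolding istopology_def by blast
  then show ?thesis
    unfolding rel_topology_def by simp
qed

lemma topspace_rel_topology:
  assumes "F \<subseteq> V \<times> V"
  shows "topspace (rel_topology V F) = V"
  using assms unfolding topspace_def openin_rel_topology by blast

lemma closure_of_rel_topology:
  assumes F: "F \<subseteq> V \<times> V"
  shows "rel_topology V F closure_of S = {x\<in>V. \<exists>s\<in>S. (x, s) \<in> F\<^sup>*}"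
proof (intro set_eqI iffI)
  fix x
  assume x: "x \<in> rel_topology V F closure_of S"
  then have "x \<in> V"
    using closure_of_subset_topspace[of "rel_topology V F" S] topspace_rel_topology[OF F] by blast
  moreover have "y \<in> V" if "(x, y) \<in> F\<^sup>*" for y
    using that \<open>x \<in> V\<close> F by (induction rule: rtrancl_induct) auto
  then have "openin (rel_topology V F) (F\<^sup>* `` {x})"
    unfolding openin_rel_topology by (blast intro: rtrancl_into_rtrancl)
  ultimately show "x \<in> {x\<in>V. \<exists>s\<in>S. (x, s) \<in> F\<^sup>*}"
    using x by (auto simp: closure_of_def)
next
  fix x
  assume "x \<in> {x\<in>V. \<exists>s\<in>S. (x, s) \<in> F\<^sup>*}"
  then obtain s where x: "x \<in> V" and s: "s \<in> S" "(x, s) \<in> F\<^sup>*"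
    by blast
  have "s \<in> U" if "openin (rel_topology V F) U" "x \<in> U" for U
    using s(2) that by (induction rule: rtrancl_induct) (auto simp: openin_rel_topology)
  then show "x \<in> rel_topology V F closure_of S"
    using x s(1) topspace_rel_topology[OF F] by (auto simp: closure_of_def)
qed

lemma EW_iff: "(x, y) \<in> EW V E W \<longleftrightarrow> x \<in> V - W \<and> (x, y) \<in> E"
  by (auto simp: EW_def)

lemma EW_subset: "E \<subseteq> V \<times> V \<Longrightarrow> EW V E W \<subseteq> V \<times> V"
  by (auto simp: EW_iff)

lemma clW_eq:
  assumes "E \<subseteq> V \<times> V"
  shows "clW V E W S = {x\<in>V. \<exists>s\<in>S. (x, s) \<in> (EW V E W)\<^sup>*}"
  unfolding clW_def by (rule closure_of_rel_topology[OF EW_subset[OF assms]])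

lemma clW_mono: "S \<subseteq> T \<Longrightarrow> clW V E W S \<subseteq> clW V E W T"
  unfolding clW_def by (rule closure_of_mono)

lemma rtrancl_EW_from_W: "(w, r) \<in> (EW V E W)\<^sup>* \<Longrightarrow> w \<in> W \<Longrightarrow> r = w"
  by (erule converse_rtranclE) (auto simp: EW_iff)

lemma BW_outside_W_iff:
  assumes "E \<subseteq> V \<times> V" and "z \<in> V - W"
  shows "(z, y) \<in> BW V E W \<longleftrightarrow> (z, y) \<in> (EW V E W)\<^sup>+"
proof -
  have "(z, y) \<in> BW V E W \<longleftrightarrow> (\<exists>u. (z, u) \<in> E \<and> (u, y) \<in> (EW V E W)\<^sup>*)"
    using assms(1) by (auto simp: BW_def rstar_def rtrancl_eq_or_trancl)
  also have "\<dots> \<longleftrightarrow> (z, y) \<in> (EW V E W)\<^sup>+"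
    using assms(2) by (auto simp: EW_iff trancl_unfold_left)
  finally show ?thesis .
qed

lemma rtrancl_EW_neq:
  assumes "E \<subseteq> V \<times> V" and "(x, y) \<in> (EW V E W)\<^sup>*" and "x \<noteq> y"
  shows "x \<in> V - W" and "(x, y) \<in> BW V E W"
proof -
  have "(x, y) \<in> (EW V E W)\<^sup>+"
    using assms(2,3) by (simp add: rtrancl_eq_or_trancl)
  then show "x \<in> V - W"
    by (auto elim: converse_tranclE simp: EW_iff)
  with \<open>(x, y) \<in> (EW V E W)\<^sup>+\<close> show "(x, y) \<in> BW V E W"
    using BW_outside_W_iff[OF assms(1)] by blast
qed

lemma KW_iff: "(u, v) \<in> KW V E W \<longleftrightarrow> (\<exists>z\<in>V - W. (z, u) \<in> BW V E W \<and> (z, v) \<in> BW V E W)"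
  by (auto simp: KW_def BWm_def)

lemma KW_sym: "(u, v) \<in> KW V E W \<Longrightarrow> (v, u) \<in> KW V E W"
  unfolding KW_iff by blast

lemma CW_iff:
  "(x, w) \<in> CW V E W \<longleftrightarrow> (x, w) \<in> (Id_on W O KW V E W O Id_on W)\<^sup>+ \<or> (x = w \<and> w \<in> W)"
  by (auto simp: CW_def)

lemma CW_subset: "CW V E W \<subseteq> W \<times> W"
proof -
  have "Id_on W O KW V E W O Id_on W \<subseteq> W \<times> W"
    by auto
  then show ?thesis
    unfolding CW_def using trancl_subset_Sigma by blast
qed

lemma foreset_RW_iff:
  "x \<in> foreset (RW V E W) {b} \<longleftrightarrow> (x = b \<and> b \<in> V) \<or>
     (\<exists>w. (x, w) \<in> CW V E W \<and> ((b, w) \<in> BW V E W \<or> (b, w) \<in> KW V E W))"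
  by (auto simp: foreset_def RW_def BWm_def)

lemma self_in_foreset_RW: "b \<in> V \<Longrightarrow> b \<in> foreset (RW V E W) {b}"
  unfolding foreset_RW_iff by blast

lemma CW_backward_closed:
  assumes "(x, w) \<in> CW V E W" and "w \<in> A"
    and step: "\<And>y z. y \<in> W \<Longrightarrow> (y, z) \<in> KW V E W \<Longrightarrow> z \<in> A \<Longrightarrow> y \<in> A"
  shows "x \<in> A"
proof -
  consider "(x, w) \<in> (Id_on W O KW V E W O Id_on W)\<^sup>+" | "x = w"
    using assms(1) unfolding CW_iff by blast
  then show ?thesis
  proof cases
    case 1
    then show ?thesis
      by (induction rule: converse_trancl_induct) (use assms(2) step in blast)+
  qed (use assms(2) in simp)
qed

lemma in_foreset_RW_if_common_ancestor:
  assumes EV: "E \<subseteq> V \<times> V"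
    and r: "r \<in> foreset (RW V E W) {b}" and t: "t \<in> W"
    and xr: "(x, r) \<in> (EW V E W)\<^sup>*" and xt: "(x, t) \<in> (EW V E W)\<^sup>*"
  shows "t \<in> foreset (RW V E W) {b}"
proof (cases "x = t")
  case True
  then show ?thesis
    using rtrancl_EW_from_W[OF xr] t r by simp
next
  case False
  then have x: "x \<in> V - W" and BW_xt: "(x, t) \<in> BW V E W"
    using rtrancl_EW_neq[OF EV xt] by auto
  have CW_tt: "(t, t) \<in> CW V E W"
    using t unfolding CW_iff by blast
  show ?thesis
  proof (cases "x = r")
    case True
    then have "r = b"
      using r x CW_subset unfolding foreset_RW_iff by blast
    then show ?thesis
      using True BW_xt CW_tt unfolding foreset_RW_iff by blast
  next
    case False
    then have "(x, r) \<in> BW V E W"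
      using rtrancl_EW_neq[OF EV xr] by blast
    then have KW_rt: "(r, t) \<in> KW V E W"
      using BW_xt x unfolding KW_iff by blast
    from r consider "r = b"
      | w where "(r, w) \<in> CW V E W" "(b, w) \<in> BW V E W \<or> (b, w) \<in> KW V E W"
      unfolding foreset_RW_iff by blast
    then show ?thesis
    proof cases
      case 1
      then show ?thesis
        using KW_rt CW_tt unfolding foreset_RW_iff by blast
    next
      case (2 w)
      have "r \<in> W"
        using 2(1) CW_subset by blast
      then have "(t, r) \<in> Id_on W O KW V E W O Id_on W"
        using KW_sym[OF KW_rt] t by blast
      then have "(t, w) \<in> CW V E W"
        using 2(1) unfolding CW_iff by (auto intro: trancl_into_trancl2)
      then show ?thesis
        using 2(2) unfolding foreset_RW_iff by blast
    qed
  qed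
qed

lemma separating_partition_if_t_separated:
  assumes EV: "E \<subseteq> V \<times> V" and "B \<subseteq> V" and "C \<subseteq> V"
    and sep: "\<forall>b\<in>B. \<forall>c\<in>C.
      clW V E W (foreset (RW V E W) {b}) \<inter> clW V E W (foreset (RW V E W) {c}) = {}"
  shows "\<exists>WB WC. WB \<inter> WC = {} \<and> WB \<union> WC = W \<and>
    clW V E W (B \<union> WB) \<inter> clW V E W (C \<union> WC) = {}"
proof (intro exI conjI)
  define WB where "WB = {w\<in>W. \<exists>b\<in>B. w \<in> foreset (RW V E W) {b}}"
  show "WB \<inter> (W - WB) = {}" and "WB \<union> (W - WB) = W"
    unfolding WB_def by blast+
  show "clW V E W (B \<union> WB) \<inter> clW V E W (C \<union> (W - WB)) = {}"
  proof (rule ccontr)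
    assume "clW V E W (B \<union> WB) \<inter> clW V E W (C \<union> (W - WB)) \<noteq> {}"
    then obtain x s t where x: "x \<in> V" and s: "s \<in> B \<union> WB" "(x, s) \<in> (EW V E W)\<^sup>*"
      and t: "t \<in> C \<union> (W - WB)" "(x, t) \<in> (EW V E W)\<^sup>*"
      unfolding clW_eq[OF EV] by blast
    have "\<exists>b\<in>B. s \<in> foreset (RW V E W) {b}"
    proof (cases "s \<in> B")
      case True
      then show ?thesis
        using self_in_foreset_RW[of s] \<open>B \<subseteq> V\<close> by blast
    next
      case False
      then show ?thesis
        using s(1) unfolding WB_def by blast
    qed
    then obtain b where b: "b \<in> B" and s_Rb: "s \<in> foreset (RW V E W) {b}"
      by blast
    have x_clRb: "x \<in> clW V E W (foreset (RW V E W) {b})"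
      using x s(2) s_Rb unfolding clW_eq[OF EV] by blast
    show False
    proof (cases "t \<in> C")
      case True
      then have "x \<in> clW V E W (foreset (RW V E W) {t})"
        using x t(2) self_in_foreset_RW[of t] \<open>C \<subseteq> V\<close> unfolding clW_eq[OF EV] by blast
      then show False
        using sep b True x_clRb by blast
    next
      case False
      then have "t \<in> W - WB"
        using t(1) by blast
      moreover have "t \<in> foreset (RW V E W) {b}"
        using in_foreset_RW_if_common_ancestor[OF EV s_Rb _ s(2) t(2)] \<open>t \<in> W - WB\<close> by blast
      ultimately show False
        using b unfolding WB_def by blast
    qed
  qed
qed

lemma foreset_RW_subset_if_separated:
  assumes EV: "E \<subseteq> V \<times> V" and "B \<subseteq> V" and "B \<inter> W = {}" and b: "b \<in> B"
    and W: "WB \<union> WC = W"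
    and disj: "clW V E W (B \<union> WB) \<inter> clW V E W (C \<union> WC) = {}"
  shows "foreset (RW V E W) {b} \<subseteq> B \<union> WB"
proof
  have common_ancestor: False
    if "x \<in> V" "(x, u) \<in> (EW V E W)\<^sup>*" "(x, v) \<in> (EW V E W)\<^sup>*" "u \<in> B \<union> WB" "v \<in> WC"
    for x u v
    using that disj unfolding clW_eq[OF EV] by blast
  have b_out: "b \<in> V - W"
    using b assms(2,3) by blast
  have no_BW: "(b, w) \<notin> BW V E W" if "w \<in> WC" for w
    using common_ancestor[of b b w] that b_out b BW_outside_W_iff[OF EV b_out]
    by (auto dest: trancl_into_rtrancl)
  have no_KW: "(u, v) \<notin> KW V E W" if "u \<in> B \<union> WB" "v \<in> WC" for u v
    using common_ancestor[of _ u v] that BW_outside_W_iff[OF EV]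
    unfolding KW_iff by (blast intro: trancl_into_rtrancl)
  fix x
  assume "x \<in> foreset (RW V E W) {b}"
  then consider "x = b"
    | w where "(x, w) \<in> CW V E W" "(b, w) \<in> BW V E W \<or> (b, w) \<in> KW V E W"
    unfolding foreset_RW_iff by blast
  then show "x \<in> B \<union> WB"
  proof cases
    case (2 w)
    show ?thesis
    proof (rule CW_backward_closed[OF 2(1)])
      show "w \<in> B \<union> WB"
        using 2 CW_subset W no_BW no_KW[of b w] b by blast
    next
      fix y z
      assume "y \<in> W" "(y, z) \<in> KW V E W" "z \<in> B \<union> WB"
      then show "y \<in> B \<union> WB"
        using no_KW[of z y] KW_sym[of y z] W by blast
    qed
  qed (use b in simp)
qed

lemma t_separated_if_separating_partition:
  assumes EV: "E \<subseteq> V \<times> V" and "B \<subseteq> V" and "C \<subseteq> V" and "B \<inter> W = {}" and "C \<inter> W = {}"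
    and W: "WB \<union> WC = W"
    and disj: "clW V E W (B \<union> WB) \<inter> clW V E W (C \<union> WC) = {}"
    and b: "b \<in> B" and c: "c \<in> C"
  shows "clW V E W (foreset (RW V E W) {b}) \<inter> clW V E W (foreset (RW V E W) {c}) = {}"
proof -
  have W': "WC \<union> WB = W" and disj': "clW V E W (C \<union> WC) \<inter> clW V E W (B \<union> WB) = {}"
    using W disj by blast+
  have "clW V E W (foreset (RW V E W) {b}) \<subseteq> clW V E W (B \<union> WB)"
    using foreset_RW_subset_if_separated[OF EV assms(2,4) b W disj] by (rule clW_mono)
  moreover have "clW V E W (foreset (RW V E W) {c}) \<subseteq> clW V E W (C \<union> WC)"
    using foreset_RW_subset_if_separated[OF EV assms(3,5) c W' disj'] by (rule clW_mono)
  ultimately show ?thesis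
    using disj by blast
qed

theorem proposition2:
  fixes V :: "'a set" and E :: "('a \<times> 'a) set" and W B C :: "'a set"
  assumes "V \<noteq> {}" and "E \<subseteq> V \<times> V" and "W \<subseteq> V" and "B \<subseteq> V" and "C \<subseteq> V"
    and "B \<inter> C = {}" and "B \<inter> W = {}" and "C \<inter> W = {}"
  shows "(\<forall>b\<in>B. \<forall>c\<in>C. clW V E W (foreset (RW V E W) {b}) \<inter> clW V E W (foreset (RW V E W) {c}) = {})
     \<longleftrightarrow> (\<exists>WB WC. WB \<inter> WC = {} \<and> WB \<union> WC = W \<and>
            clW V E W (B \<union> WB) \<inter> clW V E W (C \<union> WC) = {})"
proof
  show "\<exists>WB WC. WB \<inter> WC = {} \<and> WB \<union> WC = W \<and> clW V E W (B \<union> WB) \<inter> clW V E W (C \<union> WC) = {}"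
    if "\<forall>b\<in>B. \<forall>c\<in>C. clW V E W (foreset (RW V E W) {b}) \<inter> clW V E W (foreset (RW V E W) {c}) = {}"
    using separating_partition_if_t_separated[OF assms(2,4,5) that] .
next
  assume "\<exists>WB WC. WB \<inter> WC = {} \<and> WB \<union> WC = W \<and>
    clW V E W (B \<union> WB) \<inter> clW V E W (C \<union> WC) = {}"
  then obtain WB WC where "WB \<union> WC = W" and "clW V E W (B \<union> WB) \<inter> clW V E W (C \<union> WC) = {}"
    by blast
  then show "\<forall>b\<in>B. \<forall>c\<in>C. clW V E W (foreset (RW V E W) {b}) \<inter> clW V E W (foreset (RW V E W) {c}) = {}"
    using t_separated_if_separating_partition[OF assms(2,4,5,7,8)] by blast
qed

end
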